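(* Let $P$ be a causal stable system on $\mathcal{L}_{2e+}^n$ that is very strictly passive, i.e., there exist $\nu,\rho>0$ such that $$\langle u,Pu\rangle\ge\nu\|u\|_2^2+\rho\|Pu\|_2^2\quad\forall u\in\mathcal{L}_{2+}.$$ Then $\theta(P)\le\arccos\big(2\sqrt{\nu\rho}\big)<\pi/2$.
   Context: For $n\ge1$, $\mathcal{L}_2^n$ is the set of measurable $u:\mathbb{R}\to\mathbb{R}^n$ with $\|u\|_2^2=\int|u(t)|^2dt<\infty$, inner product $\langle u,v\rangle=\int u(t)^Tv(t)\,dt$; $\mathcal{L}_{2+}=\{u\in\mathcal{L}_2:u(t)=0\ \text{for}\ t<0\}$. For $T\ge0$, $(\Gamma_Tu)(t)=u(t)$ for $t\le T$, $0$ for $t>T$; $\mathcal{L}_{2e+}=\{u:\Gamma_Tu\in\mathcal{L}_{2+}\ \forall T\ge0\}$. A system is an operator $P:\mathcal{L}_{2e+}\to\mathcal{L}_{2e+}$ with $P0=0$, $P\ne0$; causal if $\Gamma_TP=\Gamma_TP\Gamma_T$ for all $T\ge0$; a causal system is stable if $Pu\in\mathcal{L}_{2+}$ for all $u\in\mathcal{L}_{2+}$ and $\sup_{0\ne u\in\mathcal{L}_{2+}}\|Pu\|_2/\|u\|_2<\infty$. The singular angle $\theta(P)\in[0,\pi]$ is given by $\cos\theta(P)=\inf\{\langle u,Pu\rangle/(\|u\|_2\|Pu\|_2):0\neq u\in\mathcal{L}_{2+},\ Pu\ne0\}$. *)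

theory Defs
  imports "HOL-Analysis.Analysis"
begin

type_synonym 'n signal = "real \<Rightarrow> real ^ 'n"

definition L2 :: "'n::finite signal set" where
  "L2 = {u. u \<in> borel_measurable lborel \<and> integrable lborel (\<lambda>t. (norm (u t))\<^sup>2)}"

definition L2p :: "'n::finite signal set" where
  "L2p = {u \<in> L2. \<forall>t<0. u t = 0}"

definition inner2 :: "'n::finite signal \<Rightarrow> 'n signal \<Rightarrow> real" where
  "inner2 u v = integral\<^sup>L lborel (\<lambda>t. u t \<bullet> v t)"

definition norm2 :: "'n::finite signal \<Rightarrow> real" where
  "norm2 u = sqrt (integral\<^sup>L lborel (\<lambda>t. (norm (u t))\<^sup>2))"

definition trunc :: "real \<Rightarrow> 'n::finite signal \<Rightarrow> 'n signal" where
  "trunc T u = (\<lambda>t. if t \<le> T then u t else 0)"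

definition L2ep :: "'n::finite signal set" where
  "L2ep = {u. \<forall>T\<ge>0. trunc T u \<in> L2p}"

definition is_system :: "('n::finite signal \<Rightarrow> 'n signal) \<Rightarrow> bool" where
  "is_system P \<longleftrightarrow> (\<forall>u\<in>L2ep. P u \<in> L2ep) \<and> P (\<lambda>t. 0) = (\<lambda>t. 0) \<and>
     (\<exists>u\<in>L2ep. \<not> (AE t in lborel. P u t = 0))"

definition causal :: "('n::finite signal \<Rightarrow> 'n signal) \<Rightarrow> bool" where
  "causal P \<longleftrightarrow> is_system P \<and>
     (\<forall>T\<ge>0. \<forall>u\<in>L2ep. trunc T (P u) = trunc T (P (trunc T u)))"

definition stable :: "('n::finite signal \<Rightarrow> 'n signal) \<Rightarrow> bool" where
  "stable P \<longleftrightarrow> causal P \<and> (\<forall>u\<in>L2p. P u \<in> L2p) \<and>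
     bdd_above {norm2 (P u) / norm2 u | u. u \<in> L2p \<and> norm2 u \<noteq> 0}"

definition singular_angle :: "('n::finite signal \<Rightarrow> 'n signal) \<Rightarrow> real" where
  "singular_angle P = arccos (Inf {inner2 u (P u) / (norm2 u * norm2 (P u)) | u.
       u \<in> L2p \<and> norm2 u \<noteq> 0 \<and> norm2 (P u) \<noteq> 0})"

end

theory Submission
  imports Defs
begin

text \<open>For \<open>u\<close> with \<open>\<parallel>u\<parallel>\<^sub>2, \<parallel>Pu\<parallel>\<^sub>2 > 0\<close>, very strict passivity and AM-GM give
  \<open>\<langle>u, Pu\<rangle> \<ge> \<nu>\<parallel>u\<parallel>\<^sup>2 + \<rho>\<parallel>Pu\<parallel>\<^sup>2 \<ge> 2\<surd>(\<nu>\<rho>) \<parallel>u\<parallel> \<parallel>Pu\<parallel>\<close>, so every cosine in the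
  infimum defining \<open>\<theta>(P)\<close> lies in \<open>[2\<surd>(\<nu>\<rho>), 1]\<close> (the upper bound is Cauchy-Schwarz).
  Such \<open>u\<close> exist: \<open>P\<close> is not the zero system, so by causality some truncated input
  \<open>u \<in> L\<^sub>2\<^sub>+\<close> has a nonzero output, and passivity then forces \<open>u \<noteq> 0\<close>. Finally
  \<open>arccos\<close> is decreasing and \<open>2\<surd>(\<nu>\<rho>) > 0\<close>.\<close>

definition very_strictly_passive :: "('n::finite signal \<Rightarrow> 'n signal) \<Rightarrow> real \<Rightarrow> real \<Rightarrow> bool" where
  "very_strictly_passive P \<nu> \<rho> \<longleftrightarrow>
     (\<forall>u\<in>L2p. inner2 u (P u) \<ge> \<nu> * (norm2 u)\<^sup>2 + \<rho> * (norm2 (P u))\<^sup>2)"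

definition angle_cosines :: "('n::finite signal \<Rightarrow> 'n signal) \<Rightarrow> real set" where
  "angle_cosines P = {inner2 u (P u) / (norm2 u * norm2 (P u)) | u.
       u \<in> L2p \<and> norm2 u \<noteq> 0 \<and> norm2 (P u) \<noteq> 0}"

lemma singular_angle_eq_arccos_Inf: "singular_angle P = arccos (Inf (angle_cosines P))"
  by (simp add: singular_angle_def angle_cosines_def)

lemma norm2_nonneg: "norm2 u \<ge> 0"
  by (simp add: norm2_def)

lemma power2_norm2: "u \<in> L2 \<Longrightarrow> (norm2 u)\<^sup>2 = integral\<^sup>L lborel (\<lambda>t. (norm (u t))\<^sup>2)"
  by (simp add: norm2_def integral_nonneg_AE)

lemma AE_zero_if_norm2_eq_0:
  assumes "u \<in> L2" "norm2 u = 0"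
  shows "AE t in lborel. u t = 0"
proof -
  have "integral\<^sup>L lborel (\<lambda>t. (norm (u t))\<^sup>2) = 0"
    using assms power2_norm2 by fastforce
  then have "AE t in lborel. (norm (u t))\<^sup>2 = 0"
    using assms(1) by (simp add: L2_def integral_nonneg_eq_0_iff_AE)
  then show ?thesis by simp
qed

lemma inner2_eq_0_if_AE_zero: "AE t in lborel. u t = 0 \<Longrightarrow> inner2 u v = 0"
  unfolding inner2_def by (rule integral_eq_zero_AE) (auto elim: eventually_mono)

lemma integrable_inner_L2:
  assumes "u \<in> L2" "v \<in> L2"
  shows "integrable lborel (\<lambda>t. u t \<bullet> v t)"
proof (rule Bochner_Integration.integrable_bound)
  show "integrable lborel (\<lambda>t. ((norm (u t))\<^sup>2 + (norm (v t))\<^sup>2) / 2)"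
    using assms by (simp add: L2_def)
  have "u \<in> borel_measurable lborel" "v \<in> borel_measurable lborel"
    using assms by (simp_all add: L2_def)
  then show "(\<lambda>t. u t \<bullet> v t) \<in> borel_measurable lborel"
    by measurable
  have "norm (u t \<bullet> v t) \<le> ((norm (u t))\<^sup>2 + (norm (v t))\<^sup>2) / 2" for t
    using Cauchy_Schwarz_ineq2[of "u t" "v t"] sum_squares_bound[of "norm (u t)" "norm (v t)"]
    by simp
  then show "AE t in lborel. norm (u t \<bullet> v t) \<le> norm (((norm (u t))\<^sup>2 + (norm (v t))\<^sup>2) / 2)"
    by simp
qed

lemma inner2_le_weighted_norm2:
  assumes "u \<in> L2" "v \<in> L2" "s > 0"
  shows "2 * inner2 u v \<le> s * (norm2 u)\<^sup>2 + (norm2 v)\<^sup>2 / s"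
proof -
  have pointwise: "2 * (u t \<bullet> v t) \<le> s * (norm (u t))\<^sup>2 + (norm (v t))\<^sup>2 / s" for t
  proof -
    have "0 \<le> (norm (s *\<^sub>R u t - v t))\<^sup>2 / s"
      using assms(3) by simp
    also have "\<dots> = s * (norm (u t))\<^sup>2 - 2 * (u t \<bullet> v t) + (norm (v t))\<^sup>2 / s"
      using assms(3) unfolding power2_norm_eq_inner
      by (simp add: inner_diff_left inner_diff_right inner_commute field_simps power2_eq_square)
    finally show ?thesis by simp
  qed
  have L2_int: "integrable lborel (\<lambda>t. (norm (w t))\<^sup>2)" if "w \<in> L2" for w
    using that by (simp add: L2_def)
  have "2 * inner2 u v = integral\<^sup>L lborel (\<lambda>t. 2 * (u t \<bullet> v t))"
    by (simp add: inner2_def)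
  also have "\<dots> \<le> integral\<^sup>L lborel (\<lambda>t. s * (norm (u t))\<^sup>2 + (norm (v t))\<^sup>2 / s)"
    using integrable_inner_L2[OF assms(1,2)] L2_int[OF assms(1)] L2_int[OF assms(2)] pointwise
    by (intro integral_mono) auto
  also have "\<dots> = s * (norm2 u)\<^sup>2 + (norm2 v)\<^sup>2 / s"
    using L2_int[OF assms(1)] L2_int[OF assms(2)] power2_norm2[OF assms(1)] power2_norm2[OF assms(2)]
    by simp
  finally show ?thesis .
qed

lemma inner2_le_norm2_mult:
  assumes "u \<in> L2" "v \<in> L2" "norm2 u \<noteq> 0" "norm2 v \<noteq> 0"
  shows "inner2 u v \<le> norm2 u * norm2 v"
proof -
  have pos: "norm2 u > 0" "norm2 v > 0"
    using assms(3,4) norm2_nonneg[of u] norm2_nonneg[of v] by linarith+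
  have "2 * inner2 u v \<le> (norm2 v / norm2 u) * (norm2 u)\<^sup>2 + (norm2 v)\<^sup>2 / (norm2 v / norm2 u)"
    using pos by (intro inner2_le_weighted_norm2 assms(1,2)) simp
  also have "\<dots> = 2 * (norm2 u * norm2 v)"
    using pos by (simp add: power2_eq_square)
  finally show ?thesis by simp
qed

lemma weighted_sum_squares_ge_geometric_mean:
  fixes \<nu> \<rho> a b :: real
  assumes "\<nu> \<ge> 0" "\<rho> \<ge> 0"
  shows "2 * sqrt (\<nu> * \<rho>) * (a * b) \<le> \<nu> * a\<^sup>2 + \<rho> * b\<^sup>2"
proof -
  have "0 \<le> (sqrt \<nu> * a - sqrt \<rho> * b)\<^sup>2" by simp
  also have "\<dots> = \<nu> * a\<^sup>2 + \<rho> * b\<^sup>2 - 2 * sqrt (\<nu> * \<rho>) * (a * b)"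
    using assms by (simp add: power2_eq_square algebra_simps real_sqrt_mult)
  finally show ?thesis by simp
qed

lemma L2ep_ex_trunc_not_AE_zero:
  assumes "w \<in> L2ep" "\<not> (AE t in lborel. w t = 0)"
  obtains T where "T \<ge> 0" "\<not> (AE t in lborel. trunc T w t = 0)"
proof -
  have "\<exists>T\<ge>0. \<not> (AE t in lborel. trunc T w t = 0)"
  proof (rule ccontr)
    assume "\<nexists>T. T \<ge> 0 \<and> \<not> (AE t in lborel. trunc T w t = 0)"
    then have "\<forall>n::nat. AE t in lborel. trunc (real n) w t = 0"
      by auto
    then have "AE t in lborel. \<forall>n::nat. trunc (real n) w t = 0"
      by (simp add: AE_all_countable)
    moreover have "w t = 0" if "\<forall>n::nat. trunc (real n) w t = 0" for t
    proof (cases "t < 0")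
      case True
      have "trunc 0 w \<in> L2p"
        using assms(1) by (simp add: L2ep_def)
      then show ?thesis
        using True by (auto simp: L2p_def trunc_def)
    next
      case False
      obtain n :: nat where "t \<le> real n"
        using real_arch_simple by blast
      then show ?thesis
        using that[rule_format, of n] by (simp add: trunc_def)
    qed
    ultimately have "AE t in lborel. w t = 0"
      by (auto elim: eventually_mono)
    then show False
      using assms(2) by simp
  qed
  then show thesis
    using that by blast
qed

lemma causal_ex_L2p_output_not_AE_zero:
  assumes "causal P"
  obtains v where "v \<in> L2p" "\<not> (AE t in lborel. P v t = 0)"
proof -
  have sys: "is_system P"
    using assms by (simp add: causal_def)
  then obtain u where u: "u \<in> L2ep" "\<not> (AE t in lborel. P u t = 0)"
    by (auto simp: is_system_def)
  moreover have "P u \<in> L2ep"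
    using sys u(1) by (simp add: is_system_def)
  ultimately obtain T where T: "T \<ge> 0" "\<not> (AE t in lborel. trunc T (P u) t = 0)"
    using L2ep_ex_trunc_not_AE_zero by metis
  have same_past: "trunc T (P u) = trunc T (P (trunc T u))"
    using assms T(1) u(1) by (simp add: causal_def)
  have "\<not> (AE t in lborel. P (trunc T u) t = 0)"
  proof
    assume "AE t in lborel. P (trunc T u) t = 0"
    then have "AE t in lborel. trunc T (P u) t = 0"
      unfolding same_past by (rule eventually_mono) (simp add: trunc_def)
    with T(2) show False by simp
  qed
  moreover have "trunc T u \<in> L2p"
    using u(1) T(1) by (simp add: L2ep_def)
  ultimately show ?thesis
    using that by blast
qed

lemma angle_cosines_bounds:
  assumes "stable P" "very_strictly_passive P \<nu> \<rho>" "\<nu> \<ge> 0" "\<rho> \<ge> 0"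
    and "x \<in> angle_cosines P"
  shows "2 * sqrt (\<nu> * \<rho>) \<le> x" "x \<le> 1"
proof -
  obtain u where u: "x = inner2 u (P u) / (norm2 u * norm2 (P u))" "u \<in> L2p"
      "norm2 u \<noteq> 0" "norm2 (P u) \<noteq> 0"
    using assms(5) by (auto simp: angle_cosines_def)
  have "u \<in> L2" "P u \<in> L2"
    using u(2) assms(1) by (auto simp: stable_def L2p_def)
  then have "inner2 u (P u) \<le> norm2 u * norm2 (P u)"
    using u(3,4) by (rule inner2_le_norm2_mult)
  moreover have "2 * sqrt (\<nu> * \<rho>) * (norm2 u * norm2 (P u)) \<le> inner2 u (P u)"
    using assms(2-4) u(2) weighted_sum_squares_ge_geometric_mean[of \<nu> \<rho> "norm2 u" "norm2 (P u)"]
    unfolding very_strictly_passive_def by fastforce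
  moreover have "norm2 u * norm2 (P u) > 0"
    using u(3,4) norm2_nonneg[of u] norm2_nonneg[of "P u"] by (simp add: zero_less_mult_iff)
  ultimately show "2 * sqrt (\<nu> * \<rho>) \<le> x" "x \<le> 1"
    using u(1) by (simp_all add: pos_le_divide_eq pos_divide_le_eq)
qed

lemma angle_cosines_nonempty:
  assumes "stable P" "very_strictly_passive P \<nu> \<rho>" "\<rho> > 0"
  shows "angle_cosines P \<noteq> {}"
proof -
  obtain v where v: "v \<in> L2p" "\<not> (AE t in lborel. P v t = 0)"
    using assms(1) causal_ex_L2p_output_not_AE_zero by (auto simp: stable_def)
  have "v \<in> L2" "P v \<in> L2"
    using v(1) assms(1) by (auto simp: stable_def L2p_def)
  have Pv: "norm2 (P v) \<noteq> 0"
    using AE_zero_if_norm2_eq_0[OF \<open>P v \<in> L2\<close>] v(2) by blast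
  have "norm2 v \<noteq> 0"
  proof
    assume "norm2 v = 0"
    then have "inner2 v (P v) = 0"
      using AE_zero_if_norm2_eq_0[OF \<open>v \<in> L2\<close>] inner2_eq_0_if_AE_zero by blast
    moreover have "\<rho> * (norm2 (P v))\<^sup>2 \<le> inner2 v (P v)"
      using assms(2) v(1) \<open>norm2 v = 0\<close> by (auto simp: very_strictly_passive_def)
    moreover have "\<rho> * (norm2 (P v))\<^sup>2 > 0"
      using assms(3) Pv by simp
    ultimately show False
      by simp
  qed
  then show ?thesis
    using v(1) Pv by (auto simp: angle_cosines_def)
qed

theorem proposition2:
  fixes P :: "'n::finite signal \<Rightarrow> 'n signal" and \<nu> \<rho> :: real
  assumes "stable P"
    and "\<nu> > 0" and "\<rho> > 0"
    and "\<forall>u\<in>L2p. inner2 u (P u) \<ge> \<nu> * (norm2 u)\<^sup>2 + \<rho> * (norm2 (P u))\<^sup>2"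
  shows "singular_angle P \<le> arccos (2 * sqrt (\<nu> * \<rho>)) \<and> arccos (2 * sqrt (\<nu> * \<rho>)) < pi / 2"
proof -
  let ?c = "2 * sqrt (\<nu> * \<rho>)" and ?S = "angle_cosines P"
  have vsp: "very_strictly_passive P \<nu> \<rho>"
    using assms(4) by (simp add: very_strictly_passive_def)
  note bounds = angle_cosines_bounds[OF assms(1) vsp less_imp_le[OF assms(2)] less_imp_le[OF assms(3)]]
  have nonempty: "?S \<noteq> {}"
    using angle_cosines_nonempty[OF assms(1) vsp assms(3)] .
  then obtain x where "x \<in> ?S" by blast
  have lower: "?c \<le> Inf ?S"
    using nonempty bounds(1) by (intro cInf_greatest)
  have upper: "Inf ?S \<le> 1"
    using cInf_lower[OF \<open>x \<in> ?S\<close>] bounds \<open>x \<in> ?S\<close> by (meson bdd_belowI order_trans)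
  have c_pos: "0 < ?c"
    using assms(2,3) by simp
  have "arccos (Inf ?S) \<le> arccos ?c"
    using c_pos lower upper by (intro arccos_le_arccos) linarith+
  moreover have "arccos ?c < arccos 0"
    using c_pos lower upper by (intro arccos_less_arccos) linarith+
  ultimately show ?thesis
    by (simp add: singular_angle_eq_arccos_Inf)
qed

end
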